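(* Let $\Lambda$ be a $\sigma$-finite measure on $\mathcal Y\subseteq\mathbb R$, let $\gamma\in\mathbb R\setminus\{0,-1\}$, let $Q_1,\dots,Q_k$ be probability measures on $\mathcal Y$ mutually absolutely continuous with $\Lambda$ with densities $q_j=\mathrm dQ_j/\mathrm d\Lambda$, and let $w_1,\dots,w_k>0$. Suppose that $p^{\rm opt}(y)=z_w\big\{\sum_{j=1}^k w_j q_j(y)^\gamma\big\}^{1/\gamma}$, with $z_w>0$ the constant making $\int p^{\rm opt}\mathrm d\Lambda=1$, is well defined, and let $P^{\rm opt}$ be the probability measure with density $p^{\rm opt}$. Define, for probability measures $P$ mutually absolutely continuous with $\Lambda$ (with all integrals below finite), $$A(P)=\sum_{j=1}^k w_j D^*_\gamma(P,Q_j;\Lambda),\qquad D^*_\gamma(P,Q;\Lambda)=-\frac1\gamma\frac{\int p\,q^\gamma\,\mathrm d\Lambda}{\big(\int p^{\gamma+1}\mathrm d\Lambda\big)^{1/(\gamma+1)}}+\frac1\gamma\Big(\int q^{\gamma+1}\mathrm d\Lambda\Big)^{\gamma/(\gamma+1)},$$ where $p=\mathrm dP/\mathrm d\Lambda$, $q=\mathrm dQ/\mathrm d\Lambda$. Then $P^{\rm opt}$ is the unique minimizer of $A$: $A(P)\ge A(P^{\rm opt})$ for all such $P$, with equality if and only if $P=P^{\rm opt}$.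
   Context: $D^*_\gamma$ is called the dual $\gamma$-divergence. All measures considered are probability measures on $\mathcal Y$ mutually absolutely continuous with $\Lambda$, and all integrals appearing are assumed finite. *)

theory Defs
  imports "HOL-Probability.Probability"
begin

definition mac_prob :: "real measure \<Rightarrow> real measure \<Rightarrow> bool" where
  "mac_prob L P \<longleftrightarrow> prob_space P \<and> sets P = sets L \<and>
     absolutely_continuous L P \<and> absolutely_continuous P L"

definition dens :: "real measure \<Rightarrow> real measure \<Rightarrow> real \<Rightarrow> real" where
  "dens L P = (\<lambda>y. enn2real (RN_deriv L P y))"

definition dual_gamma_div ::
  "real measure \<Rightarrow> real \<Rightarrow> (real \<Rightarrow> real) \<Rightarrow> (real \<Rightarrow> real) \<Rightarrow> real" where
  "dual_gamma_div L \<gamma> p q =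
     - (1 / \<gamma>) * (\<integral>y. p y * q y powr \<gamma> \<partial>L)
         / (\<integral>y. p y powr (\<gamma> + 1) \<partial>L) powr (1 / (\<gamma> + 1))
     + (1 / \<gamma>) * (\<integral>y. q y powr (\<gamma> + 1) \<partial>L) powr (\<gamma> / (\<gamma> + 1))"

definition A_obj ::
  "real measure \<Rightarrow> real \<Rightarrow> nat \<Rightarrow> (nat \<Rightarrow> real) \<Rightarrow> (nat \<Rightarrow> real measure) \<Rightarrow> real measure \<Rightarrow> real" where
  "A_obj L \<gamma> k w Q P = (\<Sum>j\<in>{1..k}. w j * dual_gamma_div L \<gamma> (dens L P) (dens L (Q j)))"

definition admissible ::
  "real measure \<Rightarrow> real \<Rightarrow> nat \<Rightarrow> (nat \<Rightarrow> real measure) \<Rightarrow> real measure \<Rightarrow> bool" where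
  "admissible L \<gamma> k Q P \<longleftrightarrow> mac_prob L P \<and>
     integrable L (\<lambda>y. dens L P y powr (\<gamma> + 1)) \<and>
     (\<forall>j\<in>{1..k}. integrable L (\<lambda>y. dens L P y * dens L (Q j) y powr \<gamma>))"

end

theory Submission
  imports Defs
begin

text \<open>Since \<open>\<Sum>j. w j * q j ^ \<gamma> = (p_opt / z) ^ \<gamma>\<close>, the objective equals
  \<open>C - (\<integral> p * p_opt ^ \<gamma>) / (\<gamma> * z ^ \<gamma> * \<parallel>p\<parallel>)\<close>, where \<open>\<parallel>p\<parallel> = (\<integral> p ^ (\<gamma> + 1)) ^ (1 / (\<gamma> + 1))\<close>
  and \<open>C\<close> does not depend on \<open>P\<close>. The claim is therefore the Hoelder inequality (reversed
  when \<open>\<gamma> < 0\<close>) \<open>\<gamma> * \<integral> p * u ^ \<gamma> \<le> \<gamma> * \<parallel>p\<parallel> * \<parallel>u\<parallel> ^ \<gamma>\<close> for \<open>u = p_opt\<close>, together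
  with its equality case \<open>p = c * u\<close>. After rescaling \<open>p\<close> so that \<open>\<parallel>p\<parallel> = \<parallel>u\<parallel>\<close>, it is the
  integral of a pointwise inequality expressing the strict convexity (or concavity) of
  \<open>x ^ (\<gamma> + 1)\<close> on the positive reals.\<close>

section \<open>Strict convexity of real powers\<close>

lemma powr_minus_one_sign:
  fixes x a :: real
  assumes "x > 0" "x \<noteq> 1" "a \<noteq> 0"
  shows "a * (x powr a - 1) * (x - 1) > 0"
  using powr_less_mono2[of a x 1] powr_less_mono2[of a 1 x]
    powr_less_mono2_neg[of a x 1] powr_less_mono2_neg[of a 1 x] assms
  by (cases "a > 0"; cases "x > 1") (auto simp: zero_less_mult_iff mult_less_0_iff)

lemma powr_above_tangent_strict:
  fixes t r :: real
  assumes t: "t > 0" "t \<noteq> 1" and r: "r \<noteq> 0" "r \<noteq> 1"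
  shows "r * (r - 1) * (t powr r - 1 - r * (t - 1)) > 0"
proof -
  define g where "g x = r * (r - 1) * (x powr r - 1 - r * (x - 1))" for x :: real
  define g' where "g' x = r * r * ((r - 1) * (x powr (r - 1) - 1))" for x :: real
  have deriv: "(g has_real_derivative g' x) (at x)" if "x > 0" for x
    unfolding g_def g'_def using that by (auto intro!: derivative_eq_intros simp: algebra_simps)
  have "r * r > 0"
    using r(1) not_real_square_gt_zero by blast
  have sign: "g' x * (x - 1) > 0" if "x > 0" "x \<noteq> 1" for x
  proof -
    have "0 < (r * r) * ((r - 1) * (x powr (r - 1) - 1) * (x - 1))"
      using \<open>r * r > 0\<close> powr_minus_one_sign[of x "r - 1"] that r by simp
    then show ?thesis by (simp add: g'_def mult.assoc)
  qed
  have cont: "continuous_on {a..b} g" if "a > 0" for a b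
    unfolding g_def using that by (intro continuous_intros) auto
  show ?thesis
  proof (cases "t > 1")
    case True
    have "g 1 < g t"
    proof (rule DERIV_pos_imp_increasing_open[OF True _ cont])
      fix x assume "1 < x" "x < t"
      then have "g' x > 0" using sign[of x] by (simp add: zero_less_mult_iff)
      then show "\<exists>y. (g has_real_derivative y) (at x) \<and> y > 0"
        using deriv[of x] \<open>1 < x\<close> by auto
    qed simp
    then show ?thesis by (simp add: g_def)
  next
    case False
    then have "t < 1" using t by simp
    have "g t > g 1"
    proof (rule DERIV_neg_imp_decreasing_open[OF \<open>t < 1\<close> _ cont[OF t(1)]])
      fix x assume "t < x" "x < 1"
      then have "g' x < 0" using sign[of x] t by (simp add: zero_less_mult_iff)
      then show "\<exists>y. (g has_real_derivative y) (at x) \<and> y < 0"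
        using deriv[of x] \<open>t < x\<close> t by auto
    qed
    then show ?thesis by (simp add: g_def)
  qed
qed

text \<open>With \<open>r = \<gamma> + 1\<close>, \<open>bregman_gap \<gamma> a b\<close> is \<open>\<gamma> / r\<close> times the Bregman divergence
  \<open>a ^ r - b ^ r - r * b ^ (r - 1) * (a - b)\<close> of \<open>x ^ r\<close>; the factor \<open>\<gamma> / r\<close> has the sign of
  \<open>r * (r - 1)\<close>, i.e. of the second derivative of \<open>x ^ r\<close>.\<close>

definition bregman_gap :: "real \<Rightarrow> real \<Rightarrow> real \<Rightarrow> real" where
  "bregman_gap \<gamma> a b =
     \<gamma> * (b powr (\<gamma> + 1) + (a powr (\<gamma> + 1) - b powr (\<gamma> + 1)) / (\<gamma> + 1) - a * b powr \<gamma>)"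

lemma bregman_gap_pos:
  fixes a b \<gamma> :: real
  assumes a: "a > 0" and b: "b > 0" and \<gamma>: "\<gamma> \<noteq> 0" "\<gamma> \<noteq> -1" and "a \<noteq> b"
  shows "bregman_gap \<gamma> a b > 0"
proof -
  define r where "r = \<gamma> + 1"
  define t where "t = a / b"
  have t: "t > 0" "t \<noteq> 1" and a_eq: "a = t * b"
    using a b \<open>a \<noteq> b\<close> by (auto simp: t_def)
  have r: "r \<noteq> 0" "r \<noteq> 1"
    using \<gamma> by (auto simp: r_def)
  then have "r * r > 0"
    using not_real_square_gt_zero by blast
  have "bregman_gap \<gamma> a b * (r * r) = b powr r * (r * (r - 1) * (t powr r - 1 - r * (t - 1)))"
    using b r t(1) unfolding bregman_gap_def a_eq r_def[symmetric]
    by (simp add: powr_mult r_def powr_add field_simps)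
  also have "\<dots> > 0"
    using b powr_above_tangent_strict[OF t r] by simp
  finally show ?thesis
    using \<open>r * r > 0\<close> by (simp add: zero_less_mult_iff)
qed

lemma bregman_gap_eq_0_iff:
  fixes a b \<gamma> :: real
  assumes "a > 0" "b > 0" "\<gamma> \<noteq> 0" "\<gamma> \<noteq> -1"
  shows "bregman_gap \<gamma> a b = 0 \<longleftrightarrow> a = b"
proof
  show "a = b" if "bregman_gap \<gamma> a b = 0"
    using bregman_gap_pos[OF assms] that by (cases "a = b") auto
  show "bregman_gap \<gamma> a b = 0" if "a = b"
    using that assms(2) by (simp add: bregman_gap_def powr_add)
qed

lemma bregman_gap_nonneg:
  fixes a b \<gamma> :: real
  assumes "a > 0" "b > 0" "\<gamma> \<noteq> 0" "\<gamma> \<noteq> -1"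
  shows "bregman_gap \<gamma> a b \<ge> 0"
  using bregman_gap_pos[OF assms] bregman_gap_eq_0_iff[OF assms] by (cases "a = b") auto

section \<open>Densities of mutually absolutely continuous probability measures\<close>

lemma borel_measurable_dens [measurable]: "dens L P \<in> borel_measurable L"
  unfolding dens_def by measurable

lemma mac_prob_space_not_null:
  assumes "mac_prob L P"
  shows "space L \<notin> null_sets L"
proof
  assume "space L \<in> null_sets L"
  then have "space P \<in> null_sets P"
    using assms by (auto simp: mac_prob_def absolutely_continuous_def cong: sets_eq_imp_space_eq)
  then show False
    using assms prob_space.emeasure_space_1[of P] by (auto simp: mac_prob_def)
qed

context
  fixes L P :: "real measure"
  assumes sigma_finite: "sigma_finite_measure L" and mac: "mac_prob L P"
begin

private lemma
  shows mac_prob_sets: "sets P = sets L"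
    and mac_prob_ac: "absolutely_continuous L P"
    and mac_prob_sigma_finite: "sigma_finite_measure P"
  using mac by (auto simp: mac_prob_def prob_space_imp_sigma_finite)

private lemma RN_deriv_finite_AE: "AE y in L. RN_deriv L P y \<noteq> \<infinity>"
  using sigma_finite mac_prob_sigma_finite mac_prob_ac mac_prob_sets
  by (rule sigma_finite_measure.RN_deriv_finite)

lemma density_dens: "density L (\<lambda>y. ennreal (dens L P y)) = P"
proof -
  have "density L (\<lambda>y. ennreal (dens L P y)) = density L (RN_deriv L P)"
    by (rule density_cong) (use RN_deriv_finite_AE in \<open>auto simp: dens_def less_top\<close>)
  also have "\<dots> = P"
    using sigma_finite mac_prob_ac mac_prob_sets by (rule sigma_finite_measure.density_RN_deriv)
  finally show ?thesis .
qed

lemma AE_dens_pos: "AE y in L. dens L P y > 0"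
proof -
  have "AE y in density L (RN_deriv L P). RN_deriv L P y > 0"
    by (subst AE_density) auto
  then have "AE y in P. RN_deriv L P y > 0"
    unfolding sigma_finite_measure.density_RN_deriv[OF sigma_finite mac_prob_ac mac_prob_sets] .
  then have "AE y in L. RN_deriv L P y > 0"
    using mac mac_prob_sets by (intro absolutely_continuous_AE[of L P]) (auto simp: mac_prob_def)
  then show ?thesis
    using RN_deriv_finite_AE by eventually_elim (auto simp: dens_def enn2real_positive_iff less_top)
qed

lemma integral_dens: "(\<integral>y. dens L P y \<partial>L) = 1"
proof -
  interpret P: prob_space P
    using mac by (simp add: mac_prob_def)
  show ?thesis
    using sigma_finite_measure.RN_deriv_integral[OF sigma_finite mac_prob_sigma_finite mac_prob_ac
        mac_prob_sets, of "\<lambda>_. 1"]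
    by (simp add: dens_def P.prob_space)
qed

end

lemma mac_prob_eq_if_dens_proportional:
  assumes "sigma_finite_measure L" and mac: "mac_prob L P" "mac_prob L P'"
    and dens_eq: "AE y in L. dens L P y = c * dens L P' y"
  shows "P = P'"
proof -
  have "c = 1"
    using integral_cong_AE[OF _ _ dens_eq] integral_dens[OF assms(1) mac(1)]
      integral_dens[OF assms(1) mac(2)]
    by simp
  with dens_eq have "density L (\<lambda>y. ennreal (dens L P y)) = density L (\<lambda>y. ennreal (dens L P' y))"
    by (intro density_cong) (auto elim: AE_mp)
  then show "P = P'"
    unfolding density_dens[OF assms(1) mac(1)] density_dens[OF assms(1) mac(2)] .
qed

section \<open>Hoelder's inequality with exponent \<open>\<gamma> + 1\<close>\<close>

lemma integral_pos_AE:
  fixes f :: "'a \<Rightarrow> real"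
  assumes f: "integrable M f" and pos: "AE x in M. f x > 0" and nontriv: "space M \<notin> null_sets M"
  shows "integral\<^sup>L M f > 0"
proof -
  have nonneg: "AE x in M. f x \<ge> 0"
    using pos by eventually_elim simp
  have "integral\<^sup>L M f \<noteq> 0"
  proof
    assume "integral\<^sup>L M f = 0"
    then have "AE x in M. f x = 0"
      using integral_nonneg_eq_0_iff_AE[OF f nonneg] by simp
    with pos have "AE x in M. x \<notin> space M"
      by eventually_elim simp
    then show False
      using nontriv AE_iff_null_sets[of "space M" M] by simp
  qed
  then show ?thesis
    using integral_nonneg_AE[OF nonneg] by simp
qed

lemma cross_integral_le_of_equal_powr_integrals:
  fixes p v :: "'a \<Rightarrow> real"
  assumes \<gamma>: "\<gamma> \<noteq> 0" "\<gamma> \<noteq> -1"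
    and pos: "AE y in M. p y > 0" "AE y in M. v y > 0"
    and int: "integrable M (\<lambda>y. p y powr (\<gamma> + 1))" "integrable M (\<lambda>y. v y powr (\<gamma> + 1))"
      "integrable M (\<lambda>y. p y * v y powr \<gamma>)"
    and eq: "(\<integral>y. p y powr (\<gamma> + 1) \<partial>M) = (\<integral>y. v y powr (\<gamma> + 1) \<partial>M)"
  shows "\<gamma> * (\<integral>y. p y * v y powr \<gamma> \<partial>M) \<le> \<gamma> * (\<integral>y. v y powr (\<gamma> + 1) \<partial>M)"
    and "\<gamma> * (\<integral>y. p y * v y powr \<gamma> \<partial>M) = \<gamma> * (\<integral>y. v y powr (\<gamma> + 1) \<partial>M)
           \<Longrightarrow> AE y in M. p y = v y"
proof -
  have gap_nonneg: "AE y in M. bregman_gap \<gamma> (p y) (v y) \<ge> 0"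
    using pos by eventually_elim (use bregman_gap_nonneg \<gamma> in auto)
  have gap_int: "integrable M (\<lambda>y. bregman_gap \<gamma> (p y) (v y))"
    using int unfolding bregman_gap_def by simp
  have gap_integral: "(\<integral>y. bregman_gap \<gamma> (p y) (v y) \<partial>M)
      = \<gamma> * (\<integral>y. v y powr (\<gamma> + 1) \<partial>M) - \<gamma> * (\<integral>y. p y * v y powr \<gamma> \<partial>M)"
    using int eq \<gamma> unfolding bregman_gap_def by (simp add: algebra_simps)
  have "(\<integral>y. bregman_gap \<gamma> (p y) (v y) \<partial>M) \<ge> 0"
    using gap_nonneg by (rule integral_nonneg_AE)
  then show "\<gamma> * (\<integral>y. p y * v y powr \<gamma> \<partial>M) \<le> \<gamma> * (\<integral>y. v y powr (\<gamma> + 1) \<partial>M)"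
    unfolding gap_integral by simp
  assume "\<gamma> * (\<integral>y. p y * v y powr \<gamma> \<partial>M) = \<gamma> * (\<integral>y. v y powr (\<gamma> + 1) \<partial>M)"
  then have "(\<integral>y. bregman_gap \<gamma> (p y) (v y) \<partial>M) = 0"
    unfolding gap_integral by linarith
  then have "AE y in M. bregman_gap \<gamma> (p y) (v y) = 0"
    using integral_nonneg_eq_0_iff_AE[OF gap_int gap_nonneg] by simp
  then show "AE y in M. p y = v y"
    using pos by eventually_elim (use bregman_gap_eq_0_iff \<gamma> in auto)
qed

definition Lnorm :: "'a measure \<Rightarrow> real \<Rightarrow> ('a \<Rightarrow> real) \<Rightarrow> real" where
  "Lnorm M r f = (\<integral>x. f x powr r \<partial>M) powr (1 / r)"

lemma
  assumes "integrable M (\<lambda>x. f x powr r)" "AE x in M. f x > 0" "space M \<notin> null_sets M" "r \<noteq> 0"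
  shows Lnorm_pos: "Lnorm M r f > 0"
    and Lnorm_powr: "Lnorm M r f powr r = (\<integral>x. f x powr r \<partial>M)"
proof -
  have "AE x in M. f x powr r > 0"
    using assms(2) by eventually_elim simp
  then have "(\<integral>x. f x powr r \<partial>M) > 0"
    using assms(1,3) by (intro integral_pos_AE)
  then show "Lnorm M r f > 0" "Lnorm M r f powr r = (\<integral>x. f x powr r \<partial>M)"
    using assms(4) by (simp_all add: Lnorm_def powr_powr)
qed

lemma
  fixes p :: "'a \<Rightarrow> real"
  assumes "c > 0" and [measurable]: "p \<in> borel_measurable M"
    and "AE y in M. p y \<ge> 0" "integrable M (\<lambda>y. p y powr r)"
  shows integrable_mult_powr: "integrable M (\<lambda>y. (c * p y) powr r)"
    and integral_mult_powr: "(\<integral>y. (c * p y) powr r \<partial>M) = c powr r * (\<integral>y. p y powr r \<partial>M)"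
proof -
  have eq: "AE y in M. c powr r * p y powr r = (c * p y) powr r"
    using assms(3) by eventually_elim (use \<open>c > 0\<close> in \<open>simp add: powr_mult\<close>)
  have "integrable M (\<lambda>y. c powr r * p y powr r)"
    using assms(4) by simp
  then show "integrable M (\<lambda>y. (c * p y) powr r)"
    by (rule integrable_cong_AE_imp[OF _ _ eq]) measurable
  have "(\<integral>y. c powr r * p y powr r \<partial>M) = (\<integral>y. (c * p y) powr r \<partial>M)"
    using eq by (intro integral_cong_AE) measurable
  then show "(\<integral>y. (c * p y) powr r \<partial>M) = c powr r * (\<integral>y. p y powr r \<partial>M)"
    by simp
qed

lemma holder_inequality_gamma:
  fixes p v :: "'a \<Rightarrow> real"
  assumes \<gamma>: "\<gamma> \<noteq> 0" "\<gamma> \<noteq> -1"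
    and meas: "p \<in> borel_measurable M"
    and pos: "AE y in M. p y > 0" "AE y in M. v y > 0"
    and int: "integrable M (\<lambda>y. p y powr (\<gamma> + 1))" "integrable M (\<lambda>y. v y powr (\<gamma> + 1))"
      "integrable M (\<lambda>y. p y * v y powr \<gamma>)"
    and nontriv: "space M \<notin> null_sets M"
  defines "Np \<equiv> Lnorm M (\<gamma> + 1) p" and "Nv \<equiv> Lnorm M (\<gamma> + 1) v"
  shows "\<gamma> * (\<integral>y. p y * v y powr \<gamma> \<partial>M) \<le> \<gamma> * Np * Nv powr \<gamma>"
    and "\<gamma> * (\<integral>y. p y * v y powr \<gamma> \<partial>M) = \<gamma> * Np * Nv powr \<gamma> \<Longrightarrow> AE y in M. p y = Np / Nv * v y"
proof -
  have "\<gamma> + 1 \<noteq> 0" using \<gamma> by simp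
  note p_norm = Lnorm_pos[OF int(1) pos(1) nontriv this, folded Np_def]
    Lnorm_powr[OF int(1) pos(1) nontriv this, folded Np_def]
  note v_norm = Lnorm_pos[OF int(2) pos(2) nontriv \<open>\<gamma> + 1 \<noteq> 0\<close>, folded Nv_def]
    Lnorm_powr[OF int(2) pos(2) nontriv \<open>\<gamma> + 1 \<noteq> 0\<close>, folded Nv_def]
  define c where "c = Nv / Np"
  have "c > 0" using p_norm v_norm by (simp add: c_def)
  have p_nonneg: "AE y in M. p y \<ge> 0"
    using pos(1) by eventually_elim simp
  have "c powr (\<gamma> + 1) * (\<integral>y. p y powr (\<gamma> + 1) \<partial>M) = (\<integral>y. v y powr (\<gamma> + 1) \<partial>M)"
    using p_norm v_norm by (simp add: c_def powr_divide flip: p_norm(2) v_norm(2))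
  then have same_integral: "(\<integral>y. (c * p y) powr (\<gamma> + 1) \<partial>M) = (\<integral>y. v y powr (\<gamma> + 1) \<partial>M)"
    using integral_mult_powr[OF \<open>c > 0\<close> meas p_nonneg int(1)] by simp
  have cp_pos: "AE y in M. c * p y > 0"
    using pos(1) by eventually_elim (use \<open>c > 0\<close> in simp)
  have cp_int: "integrable M (\<lambda>y. c * p y * v y powr \<gamma>)"
    using int(3) by (simp add: mult.assoc)
  note equal = cross_integral_le_of_equal_powr_integrals[OF \<gamma> cp_pos pos(2)
      integrable_mult_powr[OF \<open>c > 0\<close> meas p_nonneg int(1)] int(2) cp_int same_integral]
  have scale_cross: "\<gamma> * (\<integral>y. c * p y * v y powr \<gamma> \<partial>M) = c * (\<gamma> * (\<integral>y. p y * v y powr \<gamma> \<partial>M))"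
    by (simp add: mult.assoc)
  have scale_norms: "\<gamma> * (\<integral>y. v y powr (\<gamma> + 1) \<partial>M) = c * (\<gamma> * Np * Nv powr \<gamma>)"
  proof -
    have "(\<integral>y. v y powr (\<gamma> + 1) \<partial>M) = Nv powr \<gamma> * Nv"
      unfolding v_norm(2)[symmetric] using v_norm(1) by (simp add: powr_add)
    then show ?thesis
      using p_norm(1) by (simp add: c_def)
  qed
  show "\<gamma> * (\<integral>y. p y * v y powr \<gamma> \<partial>M) \<le> \<gamma> * Np * Nv powr \<gamma>"
    using equal(1) \<open>c > 0\<close> unfolding scale_cross scale_norms by simp
  assume "\<gamma> * (\<integral>y. p y * v y powr \<gamma> \<partial>M) = \<gamma> * Np * Nv powr \<gamma>"
  then have "AE y in M. c * p y = v y"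
    using equal(2) unfolding scale_cross scale_norms by simp
  then show "AE y in M. p y = Np / Nv * v y"
    by eventually_elim (use p_norm(1) v_norm(1) in \<open>auto simp: c_def field_simps\<close>)
qed

definition gamma_mixture ::
  "real measure \<Rightarrow> real \<Rightarrow> nat \<Rightarrow> (nat \<Rightarrow> real) \<Rightarrow> (nat \<Rightarrow> real measure) \<Rightarrow> real \<Rightarrow> real" where
  "gamma_mixture L \<gamma> k w Q y = (\<Sum>j\<in>{1..k}. w j * dens L (Q j) y powr \<gamma>)"

definition A_obj_const ::
  "real measure \<Rightarrow> real \<Rightarrow> nat \<Rightarrow> (nat \<Rightarrow> real) \<Rightarrow> (nat \<Rightarrow> real measure) \<Rightarrow> real" where
  "A_obj_const L \<gamma> k w Q =
     (\<Sum>j\<in>{1..k}. w j / \<gamma> * (\<integral>y. dens L (Q j) y powr (\<gamma> + 1) \<partial>L) powr (\<gamma> / (\<gamma> + 1)))"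

lemma borel_measurable_gamma_mixture [measurable]: "gamma_mixture L \<gamma> k w Q \<in> borel_measurable L"
  unfolding gamma_mixture_def by measurable

lemma
  assumes "admissible L \<gamma> k Q P"
  shows integrable_dens_mult_gamma_mixture:
      "integrable L (\<lambda>y. dens L P y * gamma_mixture L \<gamma> k w Q y)"
    and A_obj_plus_mixture_integral:
      "A_obj L \<gamma> k w Q P
         + (\<integral>y. dens L P y * gamma_mixture L \<gamma> k w Q y \<partial>L) / (\<gamma> * Lnorm L (\<gamma> + 1) (dens L P))
       = A_obj_const L \<gamma> k w Q"
proof -
  have int: "integrable L (\<lambda>y. dens L P y * dens L (Q j) y powr \<gamma>)" if "j \<in> {1..k}" for j
    using assms that by (simp add: admissible_def)
  have mixture_sum: "dens L P y * gamma_mixture L \<gamma> k w Q y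
      = (\<Sum>j\<in>{1..k}. w j * (dens L P y * dens L (Q j) y powr \<gamma>))" for y
    by (simp add: gamma_mixture_def sum_distrib_left algebra_simps)
  show "integrable L (\<lambda>y. dens L P y * gamma_mixture L \<gamma> k w Q y)"
    unfolding mixture_sum using int by auto
  have "(\<integral>y. dens L P y * gamma_mixture L \<gamma> k w Q y \<partial>L)
      = (\<Sum>j\<in>{1..k}. w j * (\<integral>y. dens L P y * dens L (Q j) y powr \<gamma> \<partial>L))"
    unfolding mixture_sum using int by (simp add: integral_sum)
  moreover have "A_obj L \<gamma> k w Q P
      = (\<Sum>j\<in>{1..k}. w j / \<gamma> * (\<integral>y. dens L (Q j) y powr (\<gamma> + 1) \<partial>L) powr (\<gamma> / (\<gamma> + 1))
          - w j * (\<integral>y. dens L P y * dens L (Q j) y powr \<gamma> \<partial>L) / (\<gamma> * Lnorm L (\<gamma> + 1) (dens L P)))"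
    unfolding A_obj_def dual_gamma_div_def Lnorm_def by (intro sum.cong) (simp_all add: algebra_simps)
  ultimately show "A_obj L \<gamma> k w Q P
         + (\<integral>y. dens L P y * gamma_mixture L \<gamma> k w Q y \<partial>L) / (\<gamma> * Lnorm L (\<gamma> + 1) (dens L P))
       = A_obj_const L \<gamma> k w Q"
    by (simp add: A_obj_const_def sum_subtractf sum_divide_distrib)
qed

locale dual_gamma_optimum =
  fixes L :: "real measure" and \<gamma> :: real and k :: nat
    and w :: "nat \<Rightarrow> real" and Q :: "nat \<Rightarrow> real measure" and z :: real and Popt :: "real measure"
  assumes sigma_finite: "sigma_finite_measure L"
    and gamma_ne_0: "\<gamma> \<noteq> 0" and gamma_ne_minus_1: "\<gamma> \<noteq> -1"
    and w_nonneg: "\<And>j. j \<in> {1..k} \<Longrightarrow> w j \<ge> 0"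
    and z_pos: "z > 0"
    and Popt_eq: "Popt = density L (\<lambda>y. ennreal (z * gamma_mixture L \<gamma> k w Q y powr (1 / \<gamma>)))"
    and Popt_admissible: "admissible L \<gamma> k Q Popt"
begin

abbreviation popt :: "real \<Rightarrow> real" where
  "popt \<equiv> dens L Popt"

lemma popt_powr: "AE y in L. popt y powr \<gamma> = z powr \<gamma> * gamma_mixture L \<gamma> k w Q y"
proof -
  have mixture_nonneg: "gamma_mixture L \<gamma> k w Q y \<ge> 0" for y
    using w_nonneg by (auto simp: gamma_mixture_def intro!: sum_nonneg)
  have "AE y in L. ennreal (z * gamma_mixture L \<gamma> k w Q y powr (1 / \<gamma>)) = RN_deriv L Popt y"
    using sigma_finite by (intro sigma_finite_measure.RN_deriv_unique) (auto simp: Popt_eq)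
  then show ?thesis
  proof eventually_elim
    case (elim y)
    then have "popt y = z * gamma_mixture L \<gamma> k w Q y powr (1 / \<gamma>)"
      using z_pos mixture_nonneg[of y] by (simp add: dens_def flip: elim)
    then show ?case
      using z_pos mixture_nonneg[of y] gamma_ne_0
      by (cases "gamma_mixture L \<gamma> k w Q y = 0") (simp_all add: powr_mult powr_powr)
  qed
qed

lemma
  assumes "admissible L \<gamma> k Q P"
  shows integrable_dens_mult_popt_powr: "integrable L (\<lambda>y. dens L P y * popt y powr \<gamma>)"
    and A_obj_plus_cross_integral:
      "A_obj L \<gamma> k w Q P
         + (\<integral>y. dens L P y * popt y powr \<gamma> \<partial>L) / (\<gamma> * z powr \<gamma> * Lnorm L (\<gamma> + 1) (dens L P))
       = A_obj_const L \<gamma> k w Q"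
proof -
  have AE_eq: "AE y in L. z powr \<gamma> * (dens L P y * gamma_mixture L \<gamma> k w Q y) = dens L P y * popt y powr \<gamma>"
    using popt_powr by eventually_elim simp
  show "integrable L (\<lambda>y. dens L P y * popt y powr \<gamma>)"
    using integrable_dens_mult_gamma_mixture[OF assms, of w]
    by (intro integrable_cong_AE_imp[OF _ _ AE_eq]) auto
  have "(\<integral>y. dens L P y * popt y powr \<gamma> \<partial>L)
      = z powr \<gamma> * (\<integral>y. dens L P y * gamma_mixture L \<gamma> k w Q y \<partial>L)"
    using integral_cong_AE[OF _ _ AE_eq] by simp
  then show "A_obj L \<gamma> k w Q P
         + (\<integral>y. dens L P y * popt y powr \<gamma> \<partial>L) / (\<gamma> * z powr \<gamma> * Lnorm L (\<gamma> + 1) (dens L P))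
       = A_obj_const L \<gamma> k w Q"
    using A_obj_plus_mixture_integral[OF assms, of w] z_pos by simp
qed

lemma mac_prob_opt: "mac_prob L Popt"
  using Popt_admissible by (simp add: admissible_def)

lemma
  shows Lnorm_popt_pos: "Lnorm L (\<gamma> + 1) popt > 0"
    and Lnorm_popt_powr: "Lnorm L (\<gamma> + 1) popt powr (\<gamma> + 1) = (\<integral>y. popt y powr (\<gamma> + 1) \<partial>L)"
  using Popt_admissible gamma_ne_minus_1 AE_dens_pos[OF sigma_finite mac_prob_opt]
    mac_prob_space_not_null[OF mac_prob_opt]
  by (auto simp: admissible_def intro!: Lnorm_pos Lnorm_powr)

lemma A_obj_opt:
  "A_obj L \<gamma> k w Q Popt = A_obj_const L \<gamma> k w Q - Lnorm L (\<gamma> + 1) popt powr \<gamma> / (\<gamma> * z powr \<gamma>)"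
proof -
  have "(\<integral>y. popt y * popt y powr \<gamma> \<partial>L) = (\<integral>y. popt y powr (\<gamma> + 1) \<partial>L)"
    by (simp add: dens_def powr_mult_base add.commute)
  also have "\<dots> = Lnorm L (\<gamma> + 1) popt * Lnorm L (\<gamma> + 1) popt powr \<gamma>"
    unfolding Lnorm_popt_powr[symmetric] using Lnorm_popt_pos by (simp add: powr_add)
  finally show ?thesis
    using A_obj_plus_cross_integral[OF Popt_admissible] Lnorm_popt_pos by simp
qed

lemma
  assumes adm: "admissible L \<gamma> k Q P"
  defines "cross \<equiv> (\<integral>y. dens L P y * popt y powr \<gamma> \<partial>L) / (\<gamma> * z powr \<gamma> * Lnorm L (\<gamma> + 1) (dens L P))"
  shows cross_integral_le_opt: "cross \<le> Lnorm L (\<gamma> + 1) popt powr \<gamma> / (\<gamma> * z powr \<gamma>)"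
    and cross_integral_eq_opt_imp: "cross = Lnorm L (\<gamma> + 1) popt powr \<gamma> / (\<gamma> * z powr \<gamma>) \<Longrightarrow> P = Popt"
proof -
  define p Np Nopt where "p = dens L P" and "Np = Lnorm L (\<gamma> + 1) p" and "Nopt = Lnorm L (\<gamma> + 1) popt"
  have mac: "mac_prob L P" and int_p: "integrable L (\<lambda>y. p y powr (\<gamma> + 1))"
    using adm by (simp_all add: admissible_def p_def)
  have int_opt: "integrable L (\<lambda>y. popt y powr (\<gamma> + 1))"
    using Popt_admissible by (simp add: admissible_def)
  note holder = holder_inequality_gamma[OF gamma_ne_0 gamma_ne_minus_1 borel_measurable_dens
      AE_dens_pos[OF sigma_finite mac] AE_dens_pos[OF sigma_finite mac_prob_opt] int_p[unfolded p_def]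
      int_opt integrable_dens_mult_popt_powr[OF adm] mac_prob_space_not_null[OF mac],
      folded p_def, folded Np_def Nopt_def]
  have "Np > 0"
    using Lnorm_pos[OF int_p _ mac_prob_space_not_null[OF mac]] AE_dens_pos[OF sigma_finite mac]
      gamma_ne_minus_1 by (simp add: Np_def p_def)
  have "z powr \<gamma> > 0"
    using z_pos by simp
  moreover have "\<gamma> * \<gamma> > 0"
    using gamma_ne_0 not_real_square_gt_zero by blast
  ultimately have denom_pos: "\<gamma> * \<gamma> * z powr \<gamma> * Np > 0"
    using \<open>Np > 0\<close> by simp
  have cross_eq: "cross = \<gamma> * (\<integral>y. p y * popt y powr \<gamma> \<partial>L) / (\<gamma> * \<gamma> * z powr \<gamma> * Np)"
    and opt_eq: "Nopt powr \<gamma> / (\<gamma> * z powr \<gamma>) = \<gamma> * Np * Nopt powr \<gamma> / (\<gamma> * \<gamma> * z powr \<gamma> * Np)"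
    using gamma_ne_0 \<open>Np > 0\<close> by (simp_all add: cross_def p_def Np_def)
  show "cross \<le> Lnorm L (\<gamma> + 1) popt powr \<gamma> / (\<gamma> * z powr \<gamma>)"
    unfolding Nopt_def[symmetric] cross_eq opt_eq using holder(1) less_imp_le[OF denom_pos]
    by (rule divide_right_mono)
  assume "cross = Lnorm L (\<gamma> + 1) popt powr \<gamma> / (\<gamma> * z powr \<gamma>)"
  then have "\<gamma> * (\<integral>y. p y * popt y powr \<gamma> \<partial>L) = \<gamma> * Np * Nopt powr \<gamma>"
    unfolding Nopt_def[symmetric] cross_eq opt_eq using denom_pos by (subst (asm) divide_cancel_right) auto
  then have "AE y in L. p y = Np / Nopt * popt y"
    by (rule holder(2))
  then show "P = Popt"
    unfolding p_def by (rule mac_prob_eq_if_dens_proportional[OF sigma_finite mac mac_prob_opt])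
qed

lemma A_obj_ge_opt:
  assumes "admissible L \<gamma> k Q P"
  shows "A_obj L \<gamma> k w Q P \<ge> A_obj L \<gamma> k w Q Popt"
  using A_obj_plus_cross_integral[OF assms] cross_integral_le_opt[OF assms] A_obj_opt by linarith

lemma A_obj_eq_opt_iff:
  assumes "admissible L \<gamma> k Q P"
  shows "A_obj L \<gamma> k w Q P = A_obj L \<gamma> k w Q Popt \<longleftrightarrow> P = Popt"
proof
  assume "A_obj L \<gamma> k w Q P = A_obj L \<gamma> k w Q Popt"
  then show "P = Popt"
    using A_obj_plus_cross_integral[OF assms] A_obj_opt
    by (intro cross_integral_eq_opt_imp[OF assms]) linarith
qed simp

end

theorem mainTheorem2:
  fixes L :: "real measure" and \<gamma> :: real and k :: nat
    and Q :: "nat \<Rightarrow> real measure" and w :: "nat \<Rightarrow> real"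
    and z :: real and popt :: "real \<Rightarrow> real" and Popt :: "real measure"
  assumes sf: "sigma_finite_measure L"
    and g0: "\<gamma> \<noteq> 0" and g1: "\<gamma> \<noteq> -1"
    and Q: "\<And>j. j \<in> {1..k} \<Longrightarrow> mac_prob L (Q j)"
    and Qint: "\<And>j. j \<in> {1..k} \<Longrightarrow> integrable L (\<lambda>y. dens L (Q j) y powr (\<gamma> + 1))"
    and w: "\<And>j. j \<in> {1..k} \<Longrightarrow> w j > 0"
    and popt_def: "popt = (\<lambda>y. z * (\<Sum>j\<in>{1..k}. w j * dens L (Q j) y powr \<gamma>) powr (1 / \<gamma>))"
    and z: "z > 0"
    and popt_int: "integrable L popt"
    and popt_norm: "(\<integral>y. popt y \<partial>L) = 1"
    and Popt_def: "Popt = density L (\<lambda>y. ennreal (popt y))"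
    and Popt_adm: "admissible L \<gamma> k Q Popt"
  shows "(\<forall>P. admissible L \<gamma> k Q P \<longrightarrow> A_obj L \<gamma> k w Q P \<ge> A_obj L \<gamma> k w Q Popt)
       \<and> (\<forall>P. admissible L \<gamma> k Q P \<longrightarrow>
            (A_obj L \<gamma> k w Q P = A_obj L \<gamma> k w Q Popt \<longleftrightarrow> P = Popt))"
proof -
  interpret dual_gamma_optimum L \<gamma> k w Q z Popt
  proof (rule dual_gamma_optimum.intro)
    show "Popt = density L (\<lambda>y. ennreal (z * gamma_mixture L \<gamma> k w Q y powr (1 / \<gamma>)))"
      by (simp add: Popt_def popt_def gamma_mixture_def)
    show "w j \<ge> 0" if "j \<in> {1..k}" for j
      using w[OF that] by simp
  qed (simp_all add: sf g0 g1 z Popt_adm)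
  show ?thesis
    using A_obj_ge_opt A_obj_eq_opt_iff by blast
qed

end
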